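(* Let $p$ be an odd prime and let $J$ be a finite family of $3p-3$ lattice points in $\mathbb{Z}^2$ (repetitions allowed). Then \[ 1-(p-1,J)-(p,J)+(2p-1,J)+(2p,J)\equiv 0 \pmod p. \]
   Context: For a finite family $X$ of lattice points in $\mathbb{Z}^2$ (points may repeat; subsets are subfamilies, i.e. subsets of the index set) and an integer $n\ge 0$, $(n,X)$ denotes the number of $n$-element subfamilies of $X$ whose coordinatewise sum is congruent to $(0,0)$ modulo $p$. *)

theory Defs
  imports "HOL-Computational_Algebra.Primes"
begin

text \<open>A finite family of lattice points is given as X :: nat \<Rightarrow> int \<times> int indexed by {..<N}.
  zs_count p n X N is the number of n-element subfamilies (subsets of the index set)
  whose coordinatewise sum is congruent to (0,0) modulo p.\<close>

definition zs_count :: "nat \<Rightarrow> nat \<Rightarrow> (nat \<Rightarrow> int \<times> int) \<Rightarrow> nat \<Rightarrow> nat" where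
  "zs_count p n X N = card {S. S \<subseteq> {..<N} \<and> card S = n \<and>
      (int p) dvd (\<Sum>i\<in>S. fst (X i)) \<and> (int p) dvd (\<Sum>i\<in>S. snd (X i))}"

end

theory Submission
  imports Defs "HOL-Number_Theory.Number_Theory"
begin

text \<open>
  Regard a function of subfamilies S \<subseteq> I as a polynomial in the indicator variables
  x_i = [i \<in> S]. Since the alternating sum over S \<subseteq> I of the monomial [T \<subseteq> S] vanishes
  whenever T \<subset> I, every polynomial of degree less than |I| has vanishing alternating sum
  over the subfamilies of I. Apply this to
  g(S) = (1 - A^(p-1)) (1 - B^(p-1)) ((|S| + 1)^(p-1) - |S|^(p-1)),
  where A, B are the coordinate sums of S: it has degree 3p - 4 < 3p - 3, and by Fermat it is
  congruent mod p to [p | A] [p | B] ([p | |S|] - [p | |S| + 1]). In the resulting alternating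
  sum over zero-sum subfamilies only the sizes 0, p - 1, p, 2p - 1 and 2p survive, with the
  signs of the stated combination.
\<close>

text \<open>A list [(c, T), \<dots>] encodes the multilinear polynomial \<Sum> c \<Prod>(i \<in> T) x_i, evaluated at
  the indicator vector x of S.\<close>

definition monomial_sum :: "('a::comm_ring_1 \<times> 'i set) list \<Rightarrow> 'i set \<Rightarrow> 'a" where
  "monomial_sum L S = (\<Sum>(c, T)\<leftarrow>L. c * of_bool (T \<subseteq> S))"

definition monomial_product ::
    "('a::comm_ring_1 \<times> 'i set) list \<Rightarrow> ('a \<times> 'i set) list \<Rightarrow> ('a \<times> 'i set) list" where
  "monomial_product L M = [(c * d, T \<union> U). (c, T) \<leftarrow> L, (d, U) \<leftarrow> M]"

lemma monomial_sum_Nil [simp]: "monomial_sum [] S = 0"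
  by (simp add: monomial_sum_def)

lemma monomial_sum_Cons [simp]:
  "monomial_sum ((c, T) # L) S = c * of_bool (T \<subseteq> S) + monomial_sum L S"
  by (simp add: monomial_sum_def)

lemma monomial_sum_append [simp]:
  "monomial_sum (L @ M) S = monomial_sum L S + monomial_sum M S"
  by (simp add: monomial_sum_def)

lemma monomial_sum_shift:
  "monomial_sum (map (\<lambda>(d, U). (c * d, T \<union> U)) M) S = c * of_bool (T \<subseteq> S) * monomial_sum M S"
proof (induction M)
  case (Cons x M)
  then show ?case by (cases x) (simp add: algebra_simps of_bool_conj)
qed simp

lemma monomial_sum_product:
  "monomial_sum (monomial_product L M) S = monomial_sum L S * monomial_sum M S"
proof (induction L)
  case Nil
  then show ?case by (simp add: monomial_product_def)
next
  case (Cons x L)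
  obtain c T where "x = (c, T)" by fastforce
  then have "monomial_product (x # L) M = map (\<lambda>(d, U). (c * d, T \<union> U)) M @ monomial_product L M"
    by (simp add: monomial_product_def)
  then show ?case using Cons \<open>x = (c, T)\<close> by (simp add: monomial_sum_shift distrib_right)
qed

lemma alternating_sum_supersets:
  assumes "finite I" "T \<subset> I"
  shows "(\<Sum>S\<in>Pow I. (-1) ^ card S * of_bool (T \<subseteq> S)) = (0::'a::ring_1)"
proof -
  have "{S. S \<subseteq> I \<and> T \<subseteq> S} = Pow I \<inter> {S. T \<subseteq> S}" by auto
  then have "(\<Sum>S\<in>Pow I. (-1) ^ card S * of_bool (T \<subseteq> S)) = (\<Sum>S\<in>{S. S \<subseteq> I \<and> T \<subseteq> S}. (-1::'a) ^ card S)"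
    using assms(1) by (simp add: sum.inter_restrict)
  also have "\<dots> = 0"
    using assms by (intro sum_alternating_cancels) (simp_all add: card_subsupersets_even_odd)
  finally show ?thesis .
qed

definition poly_degree_le :: "'i set \<Rightarrow> nat \<Rightarrow> ('i set \<Rightarrow> 'a::comm_ring_1) \<Rightarrow> bool" where
  "poly_degree_le I d f \<longleftrightarrow>
     (\<exists>L. (\<forall>(c, T)\<in>set L. T \<subseteq> I \<and> card T \<le> d) \<and> (\<forall>S\<subseteq>I. f S = monomial_sum L S))"

lemma poly_degree_le_cong:
  "poly_degree_le I d f \<Longrightarrow> (\<And>S. S \<subseteq> I \<Longrightarrow> f S = g S) \<Longrightarrow> poly_degree_le I d g"
  unfolding poly_degree_le_def by metis

lemma poly_degree_le_mono: "poly_degree_le I d f \<Longrightarrow> d \<le> e \<Longrightarrow> poly_degree_le I e f"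
  unfolding poly_degree_le_def by fastforce

lemma poly_degree_le_monomial:
  "T \<subseteq> I \<Longrightarrow> poly_degree_le I (card T) (\<lambda>S. c * of_bool (T \<subseteq> S))"
  unfolding poly_degree_le_def by (intro exI[of _ "[(c, T)]"]) simp

lemma poly_degree_le_const: "poly_degree_le I d (\<lambda>S. c)"
  using poly_degree_le_mono[OF poly_degree_le_monomial[of "{}" I c]] by simp

lemma poly_degree_le_add:
  assumes "poly_degree_le I d f" "poly_degree_le I d g"
  shows "poly_degree_le I d (\<lambda>S. f S + g S)"
proof -
  obtain L M where "\<forall>(c, T)\<in>set L. T \<subseteq> I \<and> card T \<le> d" "\<forall>S\<subseteq>I. f S = monomial_sum L S"
    "\<forall>(c, T)\<in>set M. T \<subseteq> I \<and> card T \<le> d" "\<forall>S\<subseteq>I. g S = monomial_sum M S"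
    using assms unfolding poly_degree_le_def by blast
  then show ?thesis unfolding poly_degree_le_def by (intro exI[of _ "L @ M"]) auto
qed

lemma poly_degree_le_mult:
  assumes "poly_degree_le I d f" "poly_degree_le I e g"
  shows "poly_degree_le I (d + e) (\<lambda>S. f S * g S)"
proof -
  obtain L M where L: "\<forall>(c, T)\<in>set L. T \<subseteq> I \<and> card T \<le> d" "\<forall>S\<subseteq>I. f S = monomial_sum L S"
    and M: "\<forall>(c, T)\<in>set M. T \<subseteq> I \<and> card T \<le> e" "\<forall>S\<subseteq>I. g S = monomial_sum M S"
    using assms unfolding poly_degree_le_def by blast
  have "card (T \<union> U) \<le> d + e" if "card T \<le> d" "card U \<le> e" for T U :: "'i set"
    using card_Un_le[of T U] that by linarith
  with L(1) M(1) have "\<forall>(c, T)\<in>set (monomial_product L M). T \<subseteq> I \<and> card T \<le> d + e"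
    by (fastforce simp: monomial_product_def)
  with L(2) M(2) show ?thesis
    unfolding poly_degree_le_def by (intro exI[of _ "monomial_product L M"]) (simp add: monomial_sum_product)
qed

lemma poly_degree_le_diff:
  assumes "poly_degree_le I d f" "poly_degree_le I d g"
  shows "poly_degree_le I d (\<lambda>S. f S - g S)"
proof -
  have "poly_degree_le I (0 + d) (\<lambda>S. - 1 * g S)"
    by (intro poly_degree_le_mult poly_degree_le_const assms(2))
  from poly_degree_le_add[OF assms(1) this[simplified]] show ?thesis by simp
qed

lemma poly_degree_le_power:
  "poly_degree_le I d f \<Longrightarrow> poly_degree_le I (k * d) (\<lambda>S. f S ^ k)"
  by (induction k) (simp_all add: poly_degree_le_const poly_degree_le_mult)

lemma poly_degree_le_sum:
  "finite K \<Longrightarrow> (\<And>k. k \<in> K \<Longrightarrow> poly_degree_le I d (f k)) \<Longrightarrow> poly_degree_le I d (\<lambda>S. \<Sum>k\<in>K. f k S)"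
  by (induction K rule: finite_induct) (simp_all add: poly_degree_le_const poly_degree_le_add)

lemma poly_degree_le_linear:
  assumes "finite I"
  shows "poly_degree_le I 1 (\<lambda>S. \<Sum>i\<in>S. a i)"
proof (rule poly_degree_le_cong)
  show "poly_degree_le I 1 (\<lambda>S. \<Sum>i\<in>I. a i * of_bool ({i} \<subseteq> S))"
    using assms poly_degree_le_monomial[of "{i}" I "a i" for i] by (intro poly_degree_le_sum) auto
  show "(\<Sum>i\<in>I. a i * of_bool ({i} \<subseteq> S)) = (\<Sum>i\<in>S. a i)" if "S \<subseteq> I" for S
    using assms that by (simp add: sum.inter_restrict[symmetric] Int_absorb1)
qed

lemma alternating_sum_poly_degree_le:
  fixes f :: "'i set \<Rightarrow> 'a::comm_ring_1"
  assumes "poly_degree_le I d f" "finite I" "d < card I"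
  shows "(\<Sum>S\<in>Pow I. (-1) ^ card S * f S) = 0"
proof -
  obtain L where L: "\<forall>(c, T)\<in>set L. T \<subseteq> I \<and> card T \<le> d" "\<forall>S\<subseteq>I. f S = monomial_sum L S"
    using assms(1) unfolding poly_degree_le_def by blast
  have "(\<Sum>S\<in>Pow I. (-1) ^ card S * monomial_sum L S) = (0::'a)" using L(1)
  proof (induction L)
    case (Cons x L)
    obtain c T where x: "x = (c, T)" by fastforce
    with Cons.prems assms(3) have "T \<subset> I" by auto
    have "(\<Sum>S\<in>Pow I. (-1) ^ card S * (c * of_bool (T \<subseteq> S)))
        = c * (\<Sum>S\<in>Pow I. (-1) ^ card S * of_bool (T \<subseteq> S))"
      by (simp add: sum_distrib_left mult_ac)
    also have "\<dots> = 0" using alternating_sum_supersets[OF assms(2) \<open>T \<subset> I\<close>, where 'a='a] by simp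
    finally have "(\<Sum>S\<in>Pow I. (-1) ^ card S * (c * of_bool (T \<subseteq> S))) = (0::'a)" .
    with Cons show ?case by (simp add: x distrib_left sum.distrib)
  qed simp
  with L(2) show ?thesis by simp
qed

lemma power_plus_one_diff_power:
  fixes c :: "'a::comm_ring_1"
  shows "(c + 1) ^ n - c ^ n = (\<Sum>k<n. of_nat (n choose k) * c ^ k)"
proof -
  have "(c + 1) ^ n = (\<Sum>k<Suc n. of_nat (n choose k) * c ^ k)"
    by (simp add: binomial_ring lessThan_Suc_atMost)
  then show ?thesis by simp
qed

lemma poly_degree_le_card_power_diff:
  assumes "finite I"
  shows "poly_degree_le I (n - 1) (\<lambda>S. (of_nat (card S) + 1) ^ n - of_nat (card S) ^ n :: 'a::comm_ring_1)"
proof -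
  have "poly_degree_le I 1 (\<lambda>S. \<Sum>i\<in>S. 1 :: 'a)"
    using assms by (rule poly_degree_le_linear)
  then have card: "poly_degree_le I 1 (\<lambda>S. of_nat (card S) :: 'a)" by simp
  have "poly_degree_le I (n - 1) (\<lambda>S. \<Sum>k<n. of_nat (n choose k) * of_nat (card S) ^ k :: 'a)"
  proof (rule poly_degree_le_sum)
    fix k assume "k \<in> {..<n}"
    then have "0 + k * 1 \<le> n - 1" by simp
    then show "poly_degree_le I (n - 1) (\<lambda>S. of_nat (n choose k) * of_nat (card S) ^ k :: 'a)"
      by (rule poly_degree_le_mono[OF poly_degree_le_mult[OF poly_degree_le_const[of I 0] poly_degree_le_power[OF card]]])
  qed simp
  then show ?thesis by (simp add: power_plus_one_diff_power)
qed

lemma fermat_theorem_int: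
  fixes t :: int
  assumes "prime p" "\<not> int p dvd t"
  shows "[t ^ (p - 1) = 1] (mod int p)"
proof -
  have "residues (int p)" using assms(1) prime_gt_1_nat by (simp add: residues_def)
  moreover have "coprime t (int p)"
    using assms by (metis coprime_commute prime_imp_coprime prime_nat_int_transfer)
  ultimately show ?thesis using residues.euler_theorem totient_prime[OF assms(1)] by fastforce
qed

lemma one_minus_power_cong_of_bool_dvd:
  fixes t :: int
  assumes "prime p"
  shows "[1 - t ^ (p - 1) = of_bool (int p dvd t)] (mod int p)"
proof (cases "int p dvd t")
  case True
  have "p - 1 \<noteq> 0" using prime_ge_2_nat[OF assms] by simp
  with True have "[t ^ (p - 1) = 0] (mod int p)"
    by (simp add: cong_0_iff dvd_trans[OF True dvd_power])
  then show ?thesis using True cong_diff[OF cong_refl[of 1]] by fastforce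
next
  case False
  then show ?thesis
    using cong_diff[OF cong_refl[of 1] fermat_theorem_int[OF assms False]] by simp
qed

lemma indicator_polynomial_cong:
  fixes t u :: int and c :: nat
  assumes "prime p"
  shows "[(1 - t ^ (p - 1)) * (1 - u ^ (p - 1)) * ((int c + 1) ^ (p - 1) - int c ^ (p - 1))
          = of_bool (int p dvd t \<and> int p dvd u) * (of_bool (p dvd c) - of_bool (p dvd Suc c))] (mod int p)"
proof -
  have "(int c + 1) ^ (p - 1) - int c ^ (p - 1) = (1 - int c ^ (p - 1)) - (1 - (int c + 1) ^ (p - 1))"
    by simp
  moreover have "[1 - int (Suc c) ^ (p - 1) = of_bool (p dvd Suc c)] (mod int p)"
    using one_minus_power_cong_of_bool_dvd[OF assms, of "int (Suc c)"] by (simp only: int_dvd_int_iff)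
  then have "[1 - (int c + 1) ^ (p - 1) = of_bool (p dvd Suc c)] (mod int p)" by (simp add: add.commute)
  then have "[(1 - t ^ (p - 1)) * (1 - u ^ (p - 1)) * ((1 - int c ^ (p - 1)) - (1 - (int c + 1) ^ (p - 1)))
      = of_bool (int p dvd t) * of_bool (int p dvd u) * (of_bool (p dvd c) - of_bool (p dvd Suc c))] (mod int p)"
    using one_minus_power_cong_of_bool_dvd[OF assms, of "int c"]
    by (intro cong_mult cong_diff one_minus_power_cong_of_bool_dvd[OF assms]) simp_all
  ultimately show ?thesis by (simp only: of_bool_conj)
qed

definition zero_sum_subsets :: "nat \<Rightarrow> ('i \<Rightarrow> int \<times> int) \<Rightarrow> 'i set \<Rightarrow> 'i set set" where
  "zero_sum_subsets p J I =
     {S. S \<subseteq> I \<and> int p dvd (\<Sum>i\<in>S. fst (J i)) \<and> int p dvd (\<Sum>i\<in>S. snd (J i))}"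

lemma finite_zero_sum_subsets: "finite I \<Longrightarrow> finite (zero_sum_subsets p J I)"
  by (rule finite_subset[of _ "Pow I"]) (auto simp: zero_sum_subsets_def)

lemma card_le_of_mem_zero_sum_subsets:
  "finite I \<Longrightarrow> S \<in> zero_sum_subsets p J I \<Longrightarrow> card S \<le> card I"
  by (simp add: zero_sum_subsets_def card_mono)

lemma zs_count_eq_sum_zero_sum_subsets:
  "int (zs_count p n J N) = (\<Sum>S\<in>zero_sum_subsets p J {..<N}. of_bool (card S = n))"
proof -
  have "zero_sum_subsets p J {..<N} \<inter> {S. card S = n} = {S. S \<subseteq> {..<N} \<and> card S = n \<and>
      int p dvd (\<Sum>i\<in>S. fst (J i)) \<and> int p dvd (\<Sum>i\<in>S. snd (J i))}"
    by (auto simp: zero_sum_subsets_def)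
  then show ?thesis by (simp add: finite_zero_sum_subsets zs_count_def)
qed

lemma zs_count_0 [simp]: "zs_count p 0 J N = 1"
proof -
  have "{S. S \<subseteq> {..<N} \<and> card S = 0 \<and>
      int p dvd (\<Sum>i\<in>S. fst (J i)) \<and> int p dvd (\<Sum>i\<in>S. snd (J i))} = {{}}"
    using finite_subset[of _ "{..<N}"] by auto
  then show ?thesis by (simp add: zs_count_def)
qed

lemma alternating_zero_sum_weight_dvd:
  fixes J :: "'i \<Rightarrow> int \<times> int"
  assumes "prime p" "finite I" "3 * p - 3 \<le> card I"
  shows "int p dvd (\<Sum>S\<in>zero_sum_subsets p J I.
           (-1) ^ card S * (of_bool (p dvd card S) - of_bool (p dvd Suc (card S))))"
proof -
  define A where "A S = (\<Sum>i\<in>S. fst (J i))" for S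
  define B where "B S = (\<Sum>i\<in>S. snd (J i))" for S
  define w where "w S = (-1) ^ card S * (of_bool (p dvd card S) - of_bool (p dvd Suc (card S)) :: int)" for S :: "'i set"
  define g where "g S = (1 - A S ^ (p - 1)) * (1 - B S ^ (p - 1))
                         * ((int (card S) + 1) ^ (p - 1) - int (card S) ^ (p - 1))" for S
  have one_minus_power: "poly_degree_le I (p - 1) (\<lambda>S. 1 - f S ^ (p - 1))"
    if "poly_degree_le I 1 f" for f :: "'i set \<Rightarrow> int"
    using poly_degree_le_diff[OF poly_degree_le_const poly_degree_le_power[OF that, of "p - 1"]] by simp
  have "poly_degree_le I ((p - 1) + (p - 1) + (p - 1 - 1)) g"
    unfolding g_def A_def B_def
    by (intro poly_degree_le_mult one_minus_power poly_degree_le_linear poly_degree_le_card_power_diff assms(2))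
  moreover have "(p - 1) + (p - 1) + (p - 1 - 1) < card I"
    using prime_ge_2_nat[OF assms(1)] assms(3) by linarith
  ultimately have "(\<Sum>S\<in>Pow I. (-1) ^ card S * g S) = 0"
    using alternating_sum_poly_degree_le assms(2) by blast
  moreover have "[(\<Sum>S\<in>Pow I. (-1) ^ card S * g S)
      = (\<Sum>S\<in>Pow I. of_bool (int p dvd A S \<and> int p dvd B S) * w S)] (mod int p)"
    unfolding g_def w_def mult.left_commute[of "of_bool _" "(-1) ^ _"]
    by (intro cong_sum cong_mult cong_refl indicator_polynomial_cong assms(1))
  moreover have "Pow I \<inter> {S. int p dvd A S \<and> int p dvd B S} = zero_sum_subsets p J I"
    by (auto simp: zero_sum_subsets_def A_def B_def)
  then have "(\<Sum>S\<in>Pow I. of_bool (int p dvd A S \<and> int p dvd B S) * w S)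
      = (\<Sum>S\<in>zero_sum_subsets p J I. w S)"
    using assms(2) by (simp only: sum_of_bool_mult_eq finite_Pow_iff)
  ultimately show ?thesis unfolding w_def by (metis cong_0_iff cong_sym)
qed

lemma dvd_iff_below_three_multiples:
  fixes p k :: nat
  assumes "k < 3 * p"
  shows "p dvd k \<longleftrightarrow> k = 0 \<or> k = p \<or> k = 2 * p"
proof
  assume "p dvd k"
  then obtain m where "k = p * m" by blast
  with assms have "m < 3" by simp
  then have "m = 0 \<or> m = 1 \<or> m = 2" by auto
  with \<open>k = p * m\<close> show "k = 0 \<or> k = p \<or> k = 2 * p" by auto
qed auto

lemma alternating_weight_eq:
  fixes p k :: nat
  assumes "odd p" "1 < p" "k \<le> 3 * p - 3"
  shows "(-1) ^ k * (of_bool (p dvd k) - of_bool (p dvd Suc k)) =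
    (of_bool (k = 0) - of_bool (k = p - 1) - of_bool (k = p) + of_bool (k = 2 * p - 1) + of_bool (k = 2 * p) :: int)"
proof -
  have "p \<ge> 3" using assms(1,2) by presburger
  have dvd_k: "p dvd k \<longleftrightarrow> k = 0 \<or> k = p \<or> k = 2 * p"
    using assms(3) \<open>p \<ge> 3\<close> by (intro dvd_iff_below_three_multiples) linarith
  have dvd_Suc_k: "p dvd Suc k \<longleftrightarrow> k = p - 1 \<or> k = 2 * p - 1"
    using assms(3) \<open>p \<ge> 3\<close> dvd_iff_below_three_multiples[of "Suc k" p] by auto
  consider "k = 0" | "k = p - 1" | "k = p" | "k = 2 * p - 1" | "k = 2 * p" | "\<not> p dvd k" "\<not> p dvd Suc k"
    using dvd_k dvd_Suc_k by blast
  then show ?thesis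
    unfolding dvd_k dvd_Suc_k using assms(1) \<open>p \<ge> 3\<close>
    by cases (auto simp: power_mult)
qed

theorem corollary1:
  fixes p :: nat and J :: "nat \<Rightarrow> int \<times> int"
  assumes "prime p" and "odd p"
  shows "(int p) dvd (1 - int (zs_count p (p - 1) J (3*p - 3)) - int (zs_count p p J (3*p - 3))
            + int (zs_count p (2*p - 1) J (3*p - 3)) + int (zs_count p (2*p) J (3*p - 3)))"
proof -
  define N where "N = 3 * p - 3"
  define Z where "Z = zero_sum_subsets p J {..<N}"
  have "int p dvd (\<Sum>S\<in>Z. (-1) ^ card S * (of_bool (p dvd card S) - of_bool (p dvd Suc (card S))))"
    unfolding Z_def N_def by (rule alternating_zero_sum_weight_dvd[OF assms(1)]) simp_all
  also have "(\<Sum>S\<in>Z. (-1) ^ card S * (of_bool (p dvd card S) - of_bool (p dvd Suc (card S))))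
      = (\<Sum>S\<in>Z. of_bool (card S = 0) - of_bool (card S = p - 1) - of_bool (card S = p)
                + of_bool (card S = 2 * p - 1) + of_bool (card S = 2 * p) :: int)"
    using assms prime_gt_1_nat card_le_of_mem_zero_sum_subsets[of "{..<N}" _ p J]
    by (intro sum.cong refl alternating_weight_eq) (auto simp: Z_def N_def)
  also have "\<dots> = 1 - int (zs_count p (p - 1) J N) - int (zs_count p p J N)
                   + int (zs_count p (2 * p - 1) J N) + int (zs_count p (2 * p) J N)"
    unfolding Z_def zs_count_eq_sum_zero_sum_subsets
    by (simp add: sum.distrib sum_subtractf flip: zs_count_eq_sum_zero_sum_subsets[of p 0])
  finally show ?thesis by (simp add: N_def)
qed

end
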